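(* Let $k,r,h$ be positive integers with $r\mid(k+h)$. Let $m$ be the smallest integer such that $n=k+h+\frac{k+h}{r}\le 2^m-1$. Then there exists a maximally recoverable local $(k,r,h)$-code over the field $\mathbb{F}_{2^{hm}}$.
   Context: For positive integers $k,r,h$ with $r\mid(k+h)$, a local $(k,r,h)$-code over a finite field $\mathbb{F}$ is a linear systematic code of dimension $k$ and length $n=k+h+\frac{k+h}{r}$ consisting of $k$ data symbols, $h$ heavy parity symbols (each a fixed $\mathbb{F}$-linear combination of all data symbols), and, after partitioning the $k+h$ data and heavy parity symbols into $\frac{k+h}{r}$ groups of size $r$, one local parity per group equal to the sum (XOR) of the $r$ symbols of that group. A local group is such a group together with its local parity. The code is maximally recoverable if for every set $E$ of coordinates obtained by picking exactly one coordinate from each local group, puncturing the code in $E$ (deleting those coordinates) yields a maximum distance separable $[k+h,k]$ code (minimum distance $h+1$). *)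

theory Defs
  imports Main
begin

text \<open>Coordinates of a local (k,r,h)-code: 0..<k are data symbols, k..<k+h heavy parities,
  k+h..<n local parities, n = k+h+(k+h)/r. The partition of the k+h data and heavy parity
  symbols into (k+h)/r groups is given by a map g (group index of each symbol);
  the heavy parities are given by a coefficient matrix H (heavy parity t = sum_j H t j * x j).\<close>

definition code_length :: "nat \<Rightarrow> nat \<Rightarrow> nat \<Rightarrow> nat" where
  "code_length k r h = k + h + (k + h) div r"

definition valid_partition :: "nat \<Rightarrow> nat \<Rightarrow> nat \<Rightarrow> (nat \<Rightarrow> nat) \<Rightarrow> bool" where
  "valid_partition k r h g \<longleftrightarrow>
     (\<forall>j<k+h. g j < (k + h) div r) \<and>
     (\<forall>l<(k + h) div r. card {j. j < k + h \<and> g j = l} = r)"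

definition dh_symbol :: "nat \<Rightarrow> nat \<Rightarrow> (nat \<Rightarrow> nat \<Rightarrow> 'a::field) \<Rightarrow> (nat \<Rightarrow> 'a) \<Rightarrow> nat \<Rightarrow> 'a" where
  "dh_symbol k h H x i = (if i < k then x i else (\<Sum>j<k. H (i - k) j * x j))"

text \<open>Encoding map of the local code: codeword of the message x (only x 0..x (k-1) matter).\<close>
definition lrc_encode :: "nat \<Rightarrow> nat \<Rightarrow> nat \<Rightarrow> (nat \<Rightarrow> nat \<Rightarrow> 'a::field) \<Rightarrow> (nat \<Rightarrow> nat)
    \<Rightarrow> (nat \<Rightarrow> 'a) \<Rightarrow> nat \<Rightarrow> 'a" where
  "lrc_encode k r h H g x i =
     (if i < k + h then dh_symbol k h H x i
      else if i < code_length k r h then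
        (\<Sum>j\<in>{j. j < k + h \<and> g j = i - (k + h)}. dh_symbol k h H x j)
      else 0)"

definition local_group :: "nat \<Rightarrow> nat \<Rightarrow> (nat \<Rightarrow> nat) \<Rightarrow> nat \<Rightarrow> nat set" where
  "local_group k h g l = {j. j < k + h \<and> g j = l} \<union> {k + h + l}"

definition nonzero_message :: "nat \<Rightarrow> (nat \<Rightarrow> 'a::zero) \<Rightarrow> bool" where
  "nonzero_message k x \<longleftrightarrow> (\<exists>j<k. x j \<noteq> 0)"

definition punctured_weight :: "nat \<Rightarrow> nat \<Rightarrow> nat \<Rightarrow> (nat \<Rightarrow> nat \<Rightarrow> 'a::field) \<Rightarrow> (nat \<Rightarrow> nat)
    \<Rightarrow> nat set \<Rightarrow> (nat \<Rightarrow> 'a) \<Rightarrow> nat" where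
  "punctured_weight k r h H g E x =
     card {i. i < code_length k r h \<and> i \<notin> E \<and> lrc_encode k r h H g x i \<noteq> 0}"

text \<open>The code punctured in E is an MDS [k+h,k] code: the encoding restricted to the
  remaining coordinates is injective on messages (dimension k), and the minimum distance
  (minimum weight of a nonzero codeword of the linear code) equals h+1.\<close>
definition punctured_MDS :: "nat \<Rightarrow> nat \<Rightarrow> nat \<Rightarrow> (nat \<Rightarrow> nat \<Rightarrow> 'a::field) \<Rightarrow> (nat \<Rightarrow> nat)
    \<Rightarrow> nat set \<Rightarrow> bool" where
  "punctured_MDS k r h H g E \<longleftrightarrow>
     (\<forall>x. nonzero_message k x \<longrightarrow>
        (\<exists>i. i < code_length k r h \<and> i \<notin> E \<and> lrc_encode k r h H g x i \<noteq> 0)) \<and>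
     (\<forall>x. nonzero_message k x \<longrightarrow> punctured_weight k r h H g E x \<ge> h + 1) \<and>
     (\<exists>x. nonzero_message k x \<and> punctured_weight k r h H g E x = h + 1)"

definition maximally_recoverable :: "nat \<Rightarrow> nat \<Rightarrow> nat \<Rightarrow> (nat \<Rightarrow> nat \<Rightarrow> 'a::field) \<Rightarrow> (nat \<Rightarrow> nat)
    \<Rightarrow> bool" where
  "maximally_recoverable k r h H g \<longleftrightarrow>
     (\<forall>E. E \<subseteq> {..<code_length k r h} \<and>
          (\<forall>l<(k + h) div r. card (E \<inter> local_group k h g l) = 1)
          \<longrightarrow> punctured_MDS k r h H g E)"

end

(*
  In characteristic 2, choose the heavy parities so that every codeword c of the data and heavy
  parity symbols satisfies the Moore checks  sum_j c_j alpha_j^(2^i) = 0  (i < h), where any 2h of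
  the alpha_j are linearly independent over GF(2). Such alpha_j exist in GF(2^(hm)) by a BCH-type
  construction  alpha_j = sum_s omega_s gamma_j^(2s+1),  with distinct nonzero gamma_j in the
  subfield GF(2^m) (there are enough since k + h < 2^m) and omega_0, ..., omega_(h-1) independent
  over that subfield. Erasing one symbol per local group and eliminating it with the local parity
  of its group turns the checks into Moore checks on the k + h remaining symbols whose columns are
  sums of at most two alpha_j, so any h of them are independent over GF(2). Hence every nonzero
  punctured codeword has weight at least h + 1, and a nonzero codeword vanishing on k - 1 chosen
  remaining coordinates has weight exactly h + 1.
*)
theory Submission
  imports Defs "HOL-Computational_Algebra.Polynomial" "HOL-Library.FuncSet"
begin

section \<open>Characteristic two\<close>

lemma CHAR_2_add_self:
  assumes "CHAR('a::ring_1) = 2"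
  shows "x + x = (0::'a)"
  using uminus_CHAR_2[OF assms, of x] by (metis add.right_inverse)

lemma CHAR_2_add_power:
  assumes "CHAR('a::comm_semiring_1) = 2"
  shows "(x + y :: 'a) ^ (2 ^ n) = x ^ (2 ^ n) + y ^ (2 ^ n)"
  by (rule freshmans_dream') (simp_all add: assms)

lemma CHAR_2_sum_power:
  assumes "CHAR('a::comm_semiring_1) = 2"
  shows "sum f A ^ (2 ^ n) = (\<Sum>i\<in>A. f i ^ (2 ^ n) :: 'a)"
  by (rule freshmans_dream_sum') (simp_all add: assms)

lemma CHAR_2_two_eq_0:
  assumes "CHAR('a::semiring_1) = 2"
  shows "(2::'a) = 0"
  using of_nat_CHAR[where 'a='a] by (simp add: assms)

lemma CHAR_2_of_nat:
  assumes "CHAR('a::semiring_1) = 2"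
  shows "(of_nat n :: 'a) = (if even n then 0 else 1)"
proof -
  have "(of_nat (2 * m) :: 'a) = 0" for m
    by (simp add: CHAR_2_two_eq_0[OF assms])
  thus ?thesis by (cases "even n") (auto elim!: oddE)
qed

lemma CHAR_2_sum_sum_eq_sum_odd:
  fixes \<alpha> :: "'b \<Rightarrow> 'a::comm_ring_1"
  assumes CHAR: "CHAR('a) = 2" and "finite S" and "finite J" and "\<And>u. u \<in> S \<Longrightarrow> B u \<subseteq> J"
  shows "(\<Sum>u\<in>S. sum \<alpha> (B u)) = sum \<alpha> {j \<in> J. odd (card {u \<in> S. j \<in> B u})}"
proof -
  have "(\<Sum>u\<in>S. sum \<alpha> (B u)) = (\<Sum>u\<in>S. \<Sum>j\<in>{j \<in> J. j \<in> B u}. \<alpha> j)"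
    using assms(4) by (intro sum.cong refl arg_cong[where f="sum \<alpha>"]) auto
  also have "\<dots> = (\<Sum>j\<in>J. \<Sum>u\<in>{u \<in> S. j \<in> B u}. \<alpha> j)"
    by (rule sum.swap_restrict[OF assms(2,3)])
  also have "\<dots> = (\<Sum>j\<in>J. if odd (card {u \<in> S. j \<in> B u}) then \<alpha> j else 0)"
    by (rule sum.cong) (auto simp: CHAR_2_of_nat[OF CHAR])
  also have "\<dots> = sum \<alpha> {j \<in> J. odd (card {u \<in> S. j \<in> B u})}"
    by (simp add: sum.inter_filter[OF assms(3)])
  finally show ?thesis .
qed

lemma CHAR_2_sum_powers_fixed:
  fixes \<gamma> :: "'b \<Rightarrow> 'a::comm_semiring_1"
  assumes CHAR: "CHAR('a) = 2" and fixed: "\<And>j. j \<in> S \<Longrightarrow> \<gamma> j ^ (2 ^ m) = \<gamma> j"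
  shows "(\<Sum>j\<in>S. \<gamma> j ^ t) ^ (2 ^ m) = (\<Sum>j\<in>S. \<gamma> j ^ t)"
proof -
  have "(\<gamma> j ^ t) ^ (2 ^ m) = \<gamma> j ^ t" if "j \<in> S" for j
    using fixed[OF that] by (metis power_mult mult.commute)
  thus ?thesis
    by (simp add: CHAR_2_sum_power[OF CHAR])
qed

lemma CHAR_2_power_sums_vanish:
  fixes \<gamma> :: "'b \<Rightarrow> 'a::comm_semiring_1"
  assumes CHAR: "CHAR('a) = 2" and odd: "\<And>s. s < h \<Longrightarrow> (\<Sum>j\<in>A. \<gamma> j ^ (2 * s + 1)) = 0"
  shows "0 < t \<Longrightarrow> t \<le> 2 * h \<Longrightarrow> (\<Sum>j\<in>A. \<gamma> j ^ t) = 0"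
proof (induction t rule: less_induct)
  case (less t)
  show ?case
  proof (cases "even t")
    case True
    then obtain t' where t': "t = 2 * t'" by blast
    have "(\<Sum>j\<in>A. \<gamma> j ^ t) = (\<Sum>j\<in>A. \<gamma> j ^ t') ^ 2"
      using CHAR_2_sum_power[OF CHAR, of "\<lambda>j. \<gamma> j ^ t'" A 1]
      by (simp add: t' mult.commute power_mult)
    thus ?thesis
      using less.IH[of t'] less.prems t' by simp
  next
    case False
    then obtain s where "t = 2 * s + 1" by (blast elim: oddE)
    thus ?thesis
      using odd less.prems by simp
  qed
qed

section \<open>Finite fields\<close>

lemma of_nat_card_UNIV_eq_0: "of_nat (card (UNIV :: 'a::{ring_1,finite} set)) = (0::'a)"
proof -
  have "(\<Sum>y\<in>UNIV. 1 + y) = (\<Sum>y\<in>UNIV. y :: 'a)"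
    by (rule sum.reindex_bij_witness[of _ "\<lambda>y. y - 1" "\<lambda>y. 1 + y"]) auto
  thus ?thesis by (simp add: sum.distrib)
qed

lemma CHAR_eq_2_if_card_power_of_two:
  assumes "card (UNIV :: 'a::{field,finite} set) = 2 ^ e" and "e > 0"
  shows "CHAR('a) = 2"
proof -
  have "prime CHAR('a)"
    by (rule prime_CHAR_semidom) (simp add: finite_imp_CHAR_pos)
  moreover have "CHAR('a) dvd 2 ^ e"
    using of_nat_card_UNIV_eq_0[where 'a='a] unfolding of_nat_eq_0_iff_char_dvd assms(1) .
  ultimately show ?thesis
    using prime_dvd_power primes_dvd_imp_eq two_is_prime_nat by blast
qed

text \<open>The library's \<open>finite_field_power_card_eq_same\<close> needs the sort \<open>finite_field\<close>.\<close>

lemma power_card_UNIV_eq_self: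
  fixes x :: "'a::{field,finite}"
  shows "x ^ card (UNIV :: 'a set) = x"
proof (cases "x = 0")
  case False
  have "(\<Prod>y\<in>UNIV-{0}. x * y) = (\<Prod>y\<in>UNIV-{0}. y)"
    by (rule prod.reindex_bij_witness[of _ "\<lambda>y. y / x" "\<lambda>y. x * y"]) (use False in auto)
  hence "x ^ card (UNIV - {0::'a}) = 1"
    by (simp add: prod.distrib)
  hence "x * x ^ (card (UNIV :: 'a set) - 1) = x"
    by (simp add: card_Diff_subset)
  thus ?thesis
    using finite_UNIV_card_ge_0[where 'a='a] by (simp flip: power_Suc)
qed (simp add: finite_UNIV_card_ge_0)

lemma card_roots_monic_le:
  fixes p :: "'a::idom poly"
  assumes "degree p < d"
  shows "card {x. x ^ d + poly p x = 0} \<le> d"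
proof -
  define P where "P = monom 1 d + p"
  have deg: "degree P = d"
    using assms by (simp add: P_def degree_add_eq_left degree_monom_eq)
  hence "P \<noteq> 0" using assms by auto
  moreover have "{x. x ^ d + poly p x = 0} = {x. poly P x = 0}"
    by (simp add: P_def poly_monom)
  ultimately show ?thesis using card_poly_roots_bound[of P] deg by simp
qed

lemma card_power_fixed_le:
  assumes "2 \<le> q"
  shows "card {x::'a::idom. x ^ q = x} \<le> q"
  using card_roots_monic_le[of "[:0, -1:]" q] assms by simp

lemma card_sum_powers_roots_le:
  assumes "2 \<le> q" and "0 < h"
  shows "card {y::'a::idom. (\<Sum>i<h. y ^ (q ^ i)) = 0} \<le> q ^ (h - 1)"
proof -
  define p :: "'a poly" where "p = (\<Sum>i<h - 1. monom 1 (q ^ i))"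
  have "degree p \<le> q ^ (h - 1) - 1"
    unfolding p_def
  proof (rule degree_sum_le)
    fix i assume "i \<in> {..<h - 1}"
    hence "q ^ i < q ^ (h - 1)" using assms by (simp add: power_strict_increasing)
    thus "degree (monom (1::'a) (q ^ i)) \<le> q ^ (h - 1) - 1" by (simp add: degree_monom_eq)
  qed simp
  moreover have "0 < q ^ (h - 1)" using assms by simp
  ultimately have "degree p < q ^ (h - 1)" by linarith
  moreover have "(\<Sum>i<h. y ^ (q ^ i)) = y ^ (q ^ (h - 1)) + poly p y" for y
    using assms(2) by (cases h) (simp_all add: p_def poly_sum poly_monom add.commute)
  ultimately show ?thesis using card_roots_monic_le[of p] by simp
qed

lemma card_UNIV_eq_card_range_mult_card_kernel:
  fixes \<phi> :: "'a::{ab_group_add,finite} \<Rightarrow> 'b::ab_group_add"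
  assumes add: "\<And>x y. \<phi> (x + y) = \<phi> x + \<phi> y"
  shows "card (UNIV :: 'a set) = card (range \<phi>) * card {x. \<phi> x = 0}"
proof -
  have diff: "\<phi> (x - y) = \<phi> x - \<phi> y" for x y
    using add[of "x - y" y] by (simp add: algebra_simps)
  have "{x. \<phi> x = \<phi> y} = (\<lambda>z. z + y) ` {x. \<phi> x = 0}" for y
    by (auto simp: diff add intro!: image_eqI[where x="_ - y"])
  hence fiber: "card {x. \<phi> x = \<phi> y} = card {x. \<phi> x = 0}" for y
    by (simp add: card_image)
  have "card (UNIV :: 'a set) = (\<Sum>z\<in>range \<phi>. card {x. \<phi> x = z})"
    using sum.group[of "UNIV :: 'a set" "range \<phi>" \<phi> "\<lambda>_. 1::nat"] by simp
  also have "\<dots> = (\<Sum>z\<in>range \<phi>. card {x. \<phi> x = 0})"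
    by (rule sum.cong) (auto simp: fiber)
  finally show ?thesis by simp
qed

text \<open>The map \<open>x \<mapsto> x ^ q + x\<close> is additive, its kernel is the fixed field of \<open>x \<mapsto> x ^ q\<close> and
  its image consists of roots of the trace \<open>\<Sum>i<h. y ^ (q ^ i)\<close>.\<close>

lemma card_power_fixed_subfield:
  fixes h m :: nat
  assumes CHAR: "CHAR('a::{field,finite}) = 2" and card: "card (UNIV :: 'a set) = 2 ^ (h * m)"
    and "0 < h" and "0 < m"
  shows "card {x::'a. x ^ (2 ^ m) = x} = 2 ^ m"
proof -
  define q :: nat where "q = 2 ^ m"
  have q: "2 \<le> q"
    using power_increasing[of 1 m "2::nat"] \<open>0 < m\<close> by (simp add: q_def)
  have frob: "(x + y) ^ (q ^ i) = x ^ (q ^ i) + y ^ (q ^ i)" for x y :: 'a and i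
    using CHAR_2_add_power[OF CHAR, of x y "m * i"] by (simp add: q_def power_mult)
  define \<phi> where "\<phi> x = x ^ q + x" for x :: 'a
  have add: "\<phi> (x + y) = \<phi> x + \<phi> y" for x y
    using frob[of x y 1] by (simp add: \<phi>_def algebra_simps)
  have kernel: "{x. \<phi> x = 0} = {x. x ^ q = x}"
    by (auto simp: \<phi>_def add_eq_0_iff2 uminus_CHAR_2[OF CHAR] CHAR_2_add_self[OF CHAR])
  have card_q: "card (UNIV :: 'a set) = q ^ h"
    by (simp add: card q_def mult.commute flip: power_mult)
  have "range \<phi> \<subseteq> {y. (\<Sum>i<h. y ^ (q ^ i)) = 0}"
  proof clarify
    fix x :: 'a
    have "(\<Sum>i<h. \<phi> x ^ (q ^ i)) = (\<Sum>i<h. x ^ (q ^ Suc i) - x ^ (q ^ i))"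
      by (simp add: \<phi>_def frob minus_CHAR_2[OF CHAR] flip: power_mult)
    also have "\<dots> = x ^ (q ^ h) - x"
      using sum_lessThan_telescope[of "\<lambda>i. x ^ (q ^ i)" h] by (simp only: power_0 power_one_right)
    finally show "(\<Sum>i<h. \<phi> x ^ (q ^ i)) = 0"
      using power_card_UNIV_eq_self[of x] by (simp add: card_q)
  qed
  hence "card (range \<phi>) \<le> q ^ (h - 1)"
    using card_sum_powers_roots_le[OF q \<open>0 < h\<close>, where 'a='a] card_mono[OF finite] le_trans
    by blast
  hence "q * q ^ (h - 1) \<le> q ^ (h - 1) * card {x::'a. x ^ q = x}"
    using card_UNIV_eq_card_range_mult_card_kernel[OF add] \<open>0 < h\<close>
    by (simp add: kernel card_q flip: power_Suc)
  hence "q \<le> card {x::'a. x ^ q = x}"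
    using q by (simp add: mult.commute)
  thus ?thesis
    using card_power_fixed_le[OF q, where 'a='a] by (simp add: q_def)
qed

section \<open>Moore and Vandermonde systems\<close>

text \<open>In characteristic 2 this is linear independence over the prime field.\<close>

definition gf2_independent :: "('b \<Rightarrow> 'a::field) \<Rightarrow> 'b set \<Rightarrow> bool" where
  "gf2_independent \<beta> W \<longleftrightarrow> (\<forall>S\<subseteq>W. S \<noteq> {} \<longrightarrow> sum \<beta> S \<noteq> 0)"

lemma gf2_independent_reindex:
  assumes "inj_on f W" and "gf2_independent \<alpha> (f ` W)"
  shows "gf2_independent (\<lambda>x. \<alpha> (f x)) W"
  unfolding gf2_independent_def
proof (intro allI impI)
  fix S assume "S \<subseteq> W" "S \<noteq> {}"
  moreover hence "(\<Sum>x\<in>S. \<alpha> (f x)) = sum \<alpha> (f ` S)"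
    using assms(1) by (simp add: sum.reindex inj_on_subset)
  ultimately show "(\<Sum>x\<in>S. \<alpha> (f x)) \<noteq> 0"
    using assms(2) by (simp add: gf2_independent_def image_mono)
qed

lemma gf2_independent_moore_step:
  fixes \<beta> :: "'b \<Rightarrow> 'a::field"
  assumes CHAR: "CHAR('a) = 2" and "finite W" and "w \<notin> W" and "gf2_independent \<beta> (insert w W)"
  shows "gf2_independent (\<lambda>u. \<beta> u ^ 2 + \<beta> w * \<beta> u) W"
  unfolding gf2_independent_def
proof (intro allI impI)
  fix S assume S: "S \<subseteq> W" "S \<noteq> {}"
  have "(\<Sum>u\<in>S. \<beta> u ^ 2 + \<beta> w * \<beta> u) = sum \<beta> S ^ 2 + \<beta> w * sum \<beta> S"
    using CHAR_2_sum_power[OF CHAR, of \<beta> S 1] by (simp add: sum.distrib sum_distrib_left)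
  also have "\<dots> = sum \<beta> S * (sum \<beta> S + \<beta> w)"
    by (simp add: power2_eq_square algebra_simps)
  also have "sum \<beta> S + \<beta> w = sum \<beta> (insert w S)"
    using S assms(2,3) finite_subset by (subst sum.insert) (auto simp: add.commute)
  moreover have "sum \<beta> S \<noteq> 0" and "sum \<beta> (insert w S) \<noteq> 0"
    using assms(4) S by (simp_all add: gf2_independent_def subset_insertI2 insert_mono)
  ultimately show "(\<Sum>u\<in>S. \<beta> u ^ 2 + \<beta> w * \<beta> u) \<noteq> 0"
    by simp
qed

text \<open>Adding \<open>\<beta> w ^ (2 ^ i)\<close> times row \<open>i\<close> to row \<open>i + 1\<close> turns column \<open>u\<close> into the
  column of \<open>\<beta> u ^ 2 + \<beta> w * \<beta> u\<close>, which vanishes for \<open>u = w\<close>.\<close>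

lemma moore_kernel_trivial:
  fixes \<beta> d :: "'b \<Rightarrow> 'a::field"
  assumes CHAR: "CHAR('a) = 2" and "finite W" and "gf2_independent \<beta> W"
    and "\<And>i. i < card W \<Longrightarrow> (\<Sum>u\<in>W. d u * \<beta> u ^ (2 ^ i)) = 0"
  shows "\<forall>u\<in>W. d u = 0"
  using assms(2-)
proof (induction W arbitrary: \<beta> d rule: finite_induct)
  case (insert w W)
  define V where "V = insert w W"
  have \<beta>w: "\<beta> w \<noteq> 0"
    using insert.prems(1) by (auto simp: gf2_independent_def dest: spec[of _ "{w}"])
  define \<gamma> where "\<gamma> u = \<beta> u ^ 2 + \<beta> w * \<beta> u" for u
  have "gf2_independent \<gamma> W"
    unfolding \<gamma>_def using gf2_independent_moore_step[OF CHAR insert.hyps insert.prems(1)] .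
  moreover have "(\<Sum>u\<in>W. d u * \<gamma> u ^ (2 ^ i)) = 0" if "i < card W" for i
  proof -
    have "\<gamma> u ^ (2 ^ i) = \<beta> u ^ (2 ^ Suc i) + \<beta> w ^ (2 ^ i) * \<beta> u ^ (2 ^ i)" for u
      by (simp add: \<gamma>_def CHAR_2_add_power[OF CHAR] power_mult_distrib mult.commute flip: power_mult)
    hence "(\<Sum>u\<in>V. d u * \<gamma> u ^ (2 ^ i)) =
        (\<Sum>u\<in>V. d u * \<beta> u ^ (2 ^ Suc i)) + \<beta> w ^ (2 ^ i) * (\<Sum>u\<in>V. d u * \<beta> u ^ (2 ^ i))"
      by (simp add: sum.distrib sum_distrib_left algebra_simps)
    also have "\<dots> = 0"
      using insert.prems(2)[of i] insert.prems(2)[of "Suc i"] insert.hyps that by (simp add: V_def)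
    finally show ?thesis
      using insert.hyps CHAR_2_add_self[OF CHAR, of "\<beta> w * \<beta> w"]
      by (simp add: V_def \<gamma>_def power2_eq_square zero_power)
  qed
  ultimately have W0: "\<forall>u\<in>W. d u = 0"
    by (rule insert.IH)
  have "(\<Sum>u\<in>V. d u * \<beta> u ^ (2 ^ 0)) = 0"
    using insert.prems(2)[of 0] insert.hyps by (simp add: V_def)
  hence "d w * \<beta> w = 0"
    using insert.hyps W0 by (simp add: V_def)
  thus ?case
    using W0 \<beta>w by simp
qed simp

lemma moore_system_solvable:
  fixes b :: "nat \<Rightarrow> 'a::{field,finite}"
  assumes CHAR: "CHAR('a) = 2" and b: "gf2_independent b {..<h}"
  shows "\<exists>y. \<forall>i<h. (\<Sum>t<h. y t * b t ^ (2 ^ i)) = v i"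
proof -
  define P where "P = PiE {..<h} (\<lambda>_. UNIV :: 'a set)"
  define L where "L y = restrict (\<lambda>i. \<Sum>t<h. y t * b t ^ (2 ^ i)) {..<h}" for y
  have "inj_on L P"
  proof (rule inj_onI)
    fix y z assume yz: "y \<in> P" "z \<in> P" "L y = L z"
    have "(\<Sum>t\<in>{..<h}. (y t - z t) * b t ^ (2 ^ i)) = 0" if "i < card {..<h}" for i
      using fun_cong[OF yz(3), of i] that by (simp add: L_def left_diff_distrib sum_subtractf)
    hence "\<forall>t\<in>{..<h}. y t - z t = 0"
      by (rule moore_kernel_trivial[OF CHAR finite_lessThan b])
    with yz(1,2) show "y = z"
      unfolding P_def by (intro PiE_ext) auto
  qed
  moreover have "L y \<in> P" for y
    by (simp add: L_def P_def)
  ultimately have "L ` P = P"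
    by (intro endo_inj_surj) (auto simp: P_def finite_PiE)
  moreover have "restrict v {..<h} \<in> P"
    by (simp add: P_def)
  ultimately obtain y where y: "L y = restrict v {..<h}"
    by (metis imageE)
  have "(\<Sum>t<h. y t * b t ^ (2 ^ i)) = v i" if "i < h" for i
    using fun_cong[OF y, of i] that by (simp add: L_def)
  thus ?thesis
    by blast
qed

lemma vandermonde_kernel_trivial:
  fixes \<gamma> d :: "'b \<Rightarrow> 'a::field"
  assumes "finite W" and "inj_on \<gamma> W" and "0 \<notin> \<gamma> ` W"
    and "\<And>t. 0 < t \<Longrightarrow> t \<le> card W \<Longrightarrow> (\<Sum>u\<in>W. d u * \<gamma> u ^ t) = 0"
  shows "\<forall>u\<in>W. d u = 0"
  using assms
proof (induction W arbitrary: d rule: finite_induct)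
  case (insert w W)
  define V where "V = insert w W"
  define d' where "d' u = d u * (\<gamma> u - \<gamma> w)" for u
  have "(\<Sum>u\<in>W. d' u * \<gamma> u ^ t) = 0" if "0 < t" "t \<le> card W" for t
  proof -
    have "(\<Sum>u\<in>V. d' u * \<gamma> u ^ t) =
        (\<Sum>u\<in>V. d u * \<gamma> u ^ Suc t) - \<gamma> w * (\<Sum>u\<in>V. d u * \<gamma> u ^ t)"
      by (simp add: d'_def sum_subtractf sum_distrib_left algebra_simps)
    also have "\<dots> = 0"
      using insert.prems(3)[of t] insert.prems(3)[of "Suc t"] insert.hyps that by (simp add: V_def)
    finally show ?thesis
      using insert.hyps by (simp add: V_def d'_def)
  qed
  hence "\<forall>u\<in>W. d' u = 0"
    using insert.prems by (intro insert.IH) auto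
  moreover have "\<gamma> u \<noteq> \<gamma> w" if "u \<in> W" for u
    using insert.prems(1) insert.hyps(2) that by (auto simp: image_iff)
  ultimately have W0: "\<forall>u\<in>W. d u = 0"
    by (simp add: d'_def)
  have "(\<Sum>u\<in>V. d u * \<gamma> u ^ 1) = 0"
    using insert.prems(3)[of 1] insert.hyps by (simp add: V_def)
  thus ?case
    using insert.hyps insert.prems(2) W0 by (simp add: V_def)
qed simp

section \<open>Families whose small subsets have nonzero sums\<close>

definition independent_over :: "'a::field set \<Rightarrow> nat \<Rightarrow> (nat \<Rightarrow> 'a) \<Rightarrow> bool" where
  "independent_over K n \<omega> \<longleftrightarrow>
     (\<forall>c. (\<forall>s<n. c s \<in> K) \<longrightarrow> (\<Sum>s<n. c s * \<omega> s) = 0 \<longrightarrow> (\<forall>s<n. c s = 0))"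

lemma independent_over_extend:
  fixes K :: "'a::field set"
  assumes indep: "independent_over K n \<omega>"
    and neg: "\<And>x. x \<in> K \<Longrightarrow> - x \<in> K" and div: "\<And>x y. x \<in> K \<Longrightarrow> y \<in> K \<Longrightarrow> x / y \<in> K"
    and z: "z \<notin> (\<lambda>c. \<Sum>s<n. c s * \<omega> s) ` (PiE {..<n} (\<lambda>_. K))"
  shows "independent_over K (Suc n) (\<omega>(n := z))"
  unfolding independent_over_def
proof (rule allI, intro impI)
  fix c assume cK: "\<forall>s<Suc n. c s \<in> K" and "(\<Sum>s<Suc n. c s * (\<omega>(n := z)) s) = 0"
  hence zero: "c n * z + (\<Sum>s<n. c s * \<omega> s) = 0"
    by (simp add: add.commute)
  have "c n = 0"
  proof (rule ccontr)
    assume cn: "c n \<noteq> 0"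
    define c' where "c' = restrict (\<lambda>s. - c s / c n) {..<n}"
    have "z = - (\<Sum>s<n. c s * \<omega> s) / c n"
      using zero cn by (simp add: field_simps eq_neg_iff_add_eq_0)
    also have "\<dots> = (\<Sum>s<n. c' s * \<omega> s)"
      by (simp add: c'_def sum_divide_distrib flip: sum_negf)
    finally have "z = (\<Sum>s<n. c' s * \<omega> s)" .
    moreover have "c' \<in> PiE {..<n} (\<lambda>_. K)"
      using cK by (simp add: c'_def neg div)
    ultimately show False
      using z by blast
  qed
  thus "\<forall>s<Suc n. c s = 0"
    using indep zero cK by (auto simp: independent_over_def less_Suc_eq)
qed

lemma exists_independent_over:
  fixes K :: "'a::{field,finite} set"
  assumes neg: "\<And>x. x \<in> K \<Longrightarrow> - x \<in> K" and div: "\<And>x y. x \<in> K \<Longrightarrow> y \<in> K \<Longrightarrow> x / y \<in> K"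
    and small: "\<And>j. j < n \<Longrightarrow> card K ^ j < card (UNIV :: 'a set)"
  shows "\<exists>\<omega>. independent_over K n \<omega>"
  using small
proof (induction n)
  case 0
  show ?case by (simp add: independent_over_def)
next
  case (Suc n)
  then obtain \<omega> where \<omega>: "independent_over K n \<omega>"
    by auto
  let ?span = "(\<lambda>c. \<Sum>s<n. c s * \<omega> s) ` (PiE {..<n} (\<lambda>_. K))"
  have "card ?span \<le> card K ^ n"
    using card_image_le[of "PiE {..<n} (\<lambda>_. K)"] by (simp add: card_PiE finite_PiE)
  also have "\<dots> < card (UNIV :: 'a set)"
    using Suc.prems by simp
  finally have "?span \<noteq> UNIV"
    by auto
  then obtain z where "z \<notin> ?span"
    by blast
  thus ?case
    using independent_over_extend[OF \<omega> neg div] by blast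
qed

text \<open>A vanishing subset sum forces the odd power sums of the \<open>\<gamma> j\<close> to vanish, hence by
  squaring all power sums up to \<open>2 * h\<close>, contradicting the Vandermonde determinant.\<close>

lemma gf2_independent_odd_power_combination:
  fixes \<gamma> :: "nat \<Rightarrow> 'a::field"
  assumes CHAR: "CHAR('a) = 2" and \<omega>: "independent_over K h \<omega>"
    and power_sums: "\<And>S t. S \<subseteq> A \<Longrightarrow> (\<Sum>j\<in>S. \<gamma> j ^ t) \<in> K"
    and A: "finite A" "card A \<le> 2 * h" "inj_on \<gamma> A" "0 \<notin> \<gamma> ` A"
  shows "gf2_independent (\<lambda>j. \<Sum>s<h. \<omega> s * \<gamma> j ^ (2 * s + 1)) A"
  unfolding gf2_independent_def
proof (intro allI impI notI)
  fix S assume S: "S \<subseteq> A" "S \<noteq> {}"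
    and zero: "(\<Sum>j\<in>S. \<Sum>s<h. \<omega> s * \<gamma> j ^ (2 * s + 1)) = 0"
  from zero have "(\<Sum>s<h. (\<Sum>j\<in>S. \<gamma> j ^ (2 * s + 1)) * \<omega> s) = 0"
    by (subst (asm) sum.swap) (simp add: sum_distrib_left sum_distrib_right mult.commute)
  hence odd: "\<And>s. s < h \<Longrightarrow> (\<Sum>j\<in>S. \<gamma> j ^ (2 * s + 1)) = 0"
    using \<omega>[unfolded independent_over_def, THEN spec, of "\<lambda>s. \<Sum>j\<in>S. \<gamma> j ^ (2 * s + 1)"]
      power_sums[OF S(1)] by blast
  have fS: "finite S"
    using S(1) A(1) by (rule finite_subset)
  have "card S \<le> 2 * h"
    using card_mono[OF A(1) S(1)] A(2) by linarith
  hence "\<And>t. 0 < t \<Longrightarrow> t \<le> card S \<Longrightarrow> (\<Sum>j\<in>S. 1 * \<gamma> j ^ t) = 0"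
    using CHAR_2_power_sums_vanish[OF CHAR odd] by simp
  moreover have "inj_on \<gamma> S"
    using S(1) A(3) by (rule inj_on_subset[rotated])
  moreover have "0 \<notin> \<gamma> ` S"
    using S(1) A(4) by blast
  ultimately have "\<forall>j\<in>S. (1::'a) = 0"
    by (intro vandermonde_kernel_trivial[OF fS])
  thus False
    using S(2) by simp
qed

lemma exists_gf2_independent_family:
  fixes N h m :: nat
  assumes CHAR: "CHAR('a::{field,finite}) = 2" and card: "card (UNIV :: 'a set) = 2 ^ (h * m)"
    and "0 < h" and "0 < m" and "N < 2 ^ m"
  shows "\<exists>\<alpha>::nat \<Rightarrow> 'a. \<forall>A\<subseteq>{..<N}. card A \<le> 2 * h \<longrightarrow> gf2_independent \<alpha> A"
proof -
  define K where "K = {x::'a. x ^ (2 ^ m) = x}"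
  have cardK: "card K = 2 ^ m"
    using card_power_fixed_subfield[OF CHAR card \<open>0 < h\<close> \<open>0 < m\<close>] by (simp add: K_def)
  have K0: "0 \<in> K"
    by (simp add: K_def)
  have "card {..<N} \<le> card (K - {0})"
    using cardK K0 \<open>N < 2 ^ m\<close> by (simp add: card_Diff_subset)
  then obtain \<gamma> where \<gamma>: "\<gamma> ` {..<N} \<subseteq> K - {0}" "inj_on \<gamma> {..<N}"
    using card_le_inj[of "{..<N}" "K - {0}"] by auto
  have "- x \<in> K" if "x \<in> K" for x
    using that by (simp add: uminus_CHAR_2[OF CHAR])
  moreover have "x / y \<in> K" if "x \<in> K" "y \<in> K" for x y
    using that by (simp add: K_def power_divide)
  moreover have "card K ^ j < card (UNIV :: 'a set)" if "j < h" for j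
    using that \<open>0 < m\<close> by (simp add: cardK card mult.commute power_strict_increasing flip: power_mult)
  ultimately obtain \<omega> where \<omega>: "independent_over K h \<omega>"
    using exists_independent_over by metis
  have power_sums: "(\<Sum>j\<in>S. \<gamma> j ^ t) \<in> K" if "S \<subseteq> {..<N}" for S t
    using \<gamma>(1) that by (simp add: K_def CHAR_2_sum_powers_fixed[OF CHAR] subset_iff)
  have "gf2_independent (\<lambda>j. \<Sum>s<h. \<omega> s * \<gamma> j ^ (2 * s + 1)) A"
    if A: "A \<subseteq> {..<N}" "card A \<le> 2 * h" for A
  proof (rule gf2_independent_odd_power_combination[OF CHAR \<omega>])
    show "(\<Sum>j\<in>S. \<gamma> j ^ t) \<in> K" if "S \<subseteq> A" for S t
      using power_sums that A(1) by blast
    show "finite A"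
      using A(1) by (rule finite_subset) simp
    show "inj_on \<gamma> A"
      using A(1) \<gamma>(2) by (rule inj_on_subset[rotated])
    show "0 \<notin> \<gamma> ` A"
      using A(1) \<gamma>(1) by blast
  qed (fact A(2))
  thus ?thesis by blast
qed

section \<open>Local codes\<close>

lemma exists_heavy_parities:
  fixes \<alpha> :: "nat \<Rightarrow> 'a::{field,finite}"
  assumes CHAR: "CHAR('a) = 2" and "gf2_independent \<alpha> {k..<k + h}"
  shows "\<exists>H. \<forall>x i. i < h \<longrightarrow> (\<Sum>j<k + h. dh_symbol k h H x j * \<alpha> j ^ (2 ^ i)) = 0"
proof -
  have "gf2_independent (\<lambda>t. \<alpha> (k + t)) {0..<h}"
    by (rule gf2_independent_reindex) (use assms(2) in \<open>simp_all add: add.commute\<close>)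
  hence \<alpha>: "gf2_independent (\<lambda>t. \<alpha> (k + t)) {..<h}"
    by (simp add: atLeast0LessThan)
  have "\<exists>y. \<forall>i<h. (\<Sum>t<h. y t * \<alpha> (k + t) ^ (2 ^ i)) = \<alpha> j ^ (2 ^ i)" for j
    using moore_system_solvable[OF CHAR \<alpha>, of "\<lambda>i. \<alpha> j ^ (2 ^ i)"] .
  then obtain Y where Y: "\<And>j i. i < h \<Longrightarrow> (\<Sum>t<h. Y j t * \<alpha> (k + t) ^ (2 ^ i)) = \<alpha> j ^ (2 ^ i)"
    by metis
  define H where "H t j = Y j t" for t j
  have split: "(\<Sum>j<k + h. f j) = (\<Sum>j<k. f j) + (\<Sum>t<h. f (k + t))" for f :: "nat \<Rightarrow> 'a"
    by (induction h) (auto simp: add.assoc)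
  have "(\<Sum>j<k + h. dh_symbol k h H x j * \<alpha> j ^ (2 ^ i)) = 0" if "i < h" for x i
  proof -
    have "(\<Sum>t<h. (\<Sum>j<k. H t j * x j) * \<alpha> (k + t) ^ (2 ^ i)) =
        (\<Sum>j<k. x j * (\<Sum>t<h. Y j t * \<alpha> (k + t) ^ (2 ^ i)))"
      unfolding sum_distrib_right sum_distrib_left H_def by (subst sum.swap) (simp add: mult_ac)
    also have "\<dots> = (\<Sum>j<k. x j * \<alpha> j ^ (2 ^ i))"
      using Y[OF that] by simp
    finally show ?thesis
      by (simp add: split dh_symbol_def CHAR_2_add_self[OF CHAR])
  qed
  thus ?thesis by blast
qed

lemma lrc_encode_diff:
  "lrc_encode k r h H g (\<lambda>j. x j - y j) i = lrc_encode k r h H g x i - lrc_encode k r h H g y i"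
proof -
  have "dh_symbol k h H (\<lambda>j. x j - y j) j = dh_symbol k h H x j - dh_symbol k h H y j" for j
    by (simp add: dh_symbol_def right_diff_distrib sum_subtractf)
  thus ?thesis
    by (simp add: lrc_encode_def sum_subtractf)
qed

lemma exists_nonzero_message_vanishing_on:
  fixes f :: "(nat \<Rightarrow> 'a::{field,finite}) \<Rightarrow> nat \<Rightarrow> 'a"
  assumes "finite T" and "card T < k" and diff: "\<And>x y i. f (\<lambda>j. x j - y j) i = f x i - f y i"
  shows "\<exists>x. nonzero_message k x \<and> (\<forall>i\<in>T. f x i = 0)"
proof -
  define M where "M = PiE {..<k} (\<lambda>_. UNIV :: 'a set)"
  define F where "F x = restrict (f x) T" for x
  have "card {0, 1::'a} \<le> card (UNIV :: 'a set)"
    by (rule card_mono) auto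
  hence "card (PiE T (\<lambda>_. UNIV :: 'a set)) < card M"
    using assms(1,2) by (simp add: M_def card_PiE power_strict_increasing)
  moreover have "F ` M \<subseteq> PiE T (\<lambda>_. UNIV)"
    by (auto simp: F_def)
  ultimately have "\<not> inj_on F M"
    using card_inj_on_le[of F M "PiE T (\<lambda>_. UNIV)"] assms(1) by (auto simp: finite_PiE)
  then obtain x y where xy: "x \<in> M" "y \<in> M" "x \<noteq> y" "F x = F y"
    by (auto simp: inj_on_def)
  have "\<exists>j<k. x j \<noteq> y j"
  proof (rule ccontr)
    assume "\<not> (\<exists>j<k. x j \<noteq> y j)"
    hence "x = y"
      using xy(1,2) unfolding M_def by (intro PiE_ext) auto
    thus False
      using xy(3) by contradiction
  qed
  hence "nonzero_message k (\<lambda>j. x j - y j)"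
    by (simp add: nonzero_message_def)
  moreover have "f (\<lambda>j. x j - y j) i = 0" if "i \<in> T" for i
    using fun_cong[OF xy(4), of i] that by (simp add: F_def diff)
  ultimately show ?thesis by blast
qed

lemma valid_partition_div:
  assumes "0 < r" and "r dvd k + h"
  shows "valid_partition k r h (\<lambda>j. j div r)"
  unfolding valid_partition_def
proof (intro conjI allI impI)
  fix j assume "j < k + h"
  thus "j div r < (k + h) div r"
    using assms by (auto simp: less_mult_imp_div_less elim!: dvdE)
next
  fix l assume l: "l < (k + h) div r"
  obtain c where c: "k + h = r * c"
    using assms(2) by (rule dvdE)
  hence "Suc l * r \<le> c * r"
    using l assms(1) by (intro mult_le_mono1) simp
  hence "l * r + r \<le> k + h"
    by (simp add: c mult.commute)
  have "{j. j < k + h \<and> j div r = l} = (\<lambda>i. l * r + i) ` {..<r}"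
  proof (intro equalityI subsetI)
    fix j assume "j \<in> {j. j < k + h \<and> j div r = l}"
    hence "j = l * r + j mod r" and "j mod r < r"
      using assms(1) by (auto simp: div_mult_mod_eq)
    thus "j \<in> (\<lambda>i. l * r + i) ` {..<r}" by blast
  qed (use \<open>l * r + r \<le> k + h\<close> assms(1) in auto)
  thus "card {j. j < k + h \<and> j div r = l} = r"
    by (simp add: card_image)
qed

locale erasure_pattern =
  fixes k r h :: nat and g :: "nat \<Rightarrow> nat" and E :: "nat set"
  assumes group_lt: "\<And>j. j < k + h \<Longrightarrow> g j < (k + h) div r"
    and erasures_subset: "E \<subseteq> {..<code_length k r h}"
    and card_erasures_in_group: "\<And>l. l < (k + h) div r \<Longrightarrow> card (E \<inter> local_group k h g l) = 1"
begin

definition group_of :: "nat \<Rightarrow> nat" where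
  "group_of u = (if u < k + h then g u else u - (k + h))"

definition erased :: "nat \<Rightarrow> nat" where
  "erased l = the_elem (E \<inter> local_group k h g l)"

definition unerased :: "nat set" where
  "unerased = {..<code_length k r h} - E"

text \<open>Replacing an erased data or heavy parity symbol by the sum of the other symbols of its
  local group (local parity included), the Moore checks become checks on the unerased symbols in
  which \<open>u\<close> has the coefficient \<open>\<Sum>j\<in>support u. \<alpha> j ^ (2 ^ i)\<close>.\<close>

definition support :: "nat \<Rightarrow> nat set" where
  "support u = {u, erased (group_of u)} \<inter> {..<k + h}"

lemma finite_unerased: "finite unerased"
  by (simp add: unerased_def)

lemma mem_local_group_iff:
  assumes "l < (k + h) div r"
  shows "u \<in> local_group k h g l \<longleftrightarrow> u < code_length k r h \<and> group_of u = l"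
  using assms group_lt by (auto simp: local_group_def group_of_def code_length_def)

lemma group_of_lt: "u < code_length k r h \<Longrightarrow> group_of u < (k + h) div r"
  using group_lt by (auto simp: group_of_def code_length_def)

lemma erasures_in_group:
  assumes "l < (k + h) div r"
  shows "E \<inter> local_group k h g l = {erased l}"
proof -
  obtain u where "E \<inter> local_group k h g l = {u}"
    using card_erasures_in_group[OF assms] by (rule card_1_singletonE)
  thus ?thesis by (simp add: erased_def)
qed

lemma erased_mem:
  assumes "l < (k + h) div r"
  shows "erased l \<in> E" and "erased l < code_length k r h" and "group_of (erased l) = l"
  using erasures_in_group[OF assms] mem_local_group_iff[OF assms] by blast+

lemma mem_erasures_iff: "u \<in> E \<longleftrightarrow> u < code_length k r h \<and> erased (group_of u) = u"
proof
  assume u: "u \<in> E"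
  hence n: "u < code_length k r h"
    using erasures_subset by auto
  hence "u \<in> E \<inter> local_group k h g (group_of u)"
    using u mem_local_group_iff[OF group_of_lt] by blast
  thus "u < code_length k r h \<and> erased (group_of u) = u"
    using n erasures_in_group[OF group_of_lt[OF n]] by auto
qed (metis erased_mem(1) group_of_lt)

lemma card_unerased: "card unerased = k + h"
proof -
  have "E = erased ` {..<(k + h) div r}"
  proof (intro equalityI subsetI)
    fix u assume "u \<in> E"
    hence "u < code_length k r h" and "erased (group_of u) = u"
      by (simp_all add: mem_erasures_iff)
    thus "u \<in> erased ` {..<(k + h) div r}"
      using group_of_lt by (metis image_eqI lessThan_iff)
  qed (auto simp: erased_mem(1))
  moreover have "inj_on erased {..<(k + h) div r}"
    by (rule inj_on_inverseI[where g = group_of]) (simp add: erased_mem(3))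
  ultimately have "card E = (k + h) div r"
    by (metis card_image card_lessThan)
  thus ?thesis
    using erasures_subset by (simp add: unerased_def card_Diff_subset finite_subset code_length_def)
qed

lemma unerased_support_unerased:
  assumes j: "j < k + h" "j \<notin> E"
  shows "{u \<in> unerased. j \<in> support u} = {j}"
proof -
  have "u \<in> unerased \<and> j \<in> support u \<longleftrightarrow> u = j" for u
  proof
    assume u: "u \<in> unerased \<and> j \<in> support u"
    hence "erased (group_of u) \<in> E"
      by (intro erased_mem(1) group_of_lt) (simp add: unerased_def)
    thus "u = j"
      using u j(2) by (auto simp: support_def)
  qed (use j in \<open>simp add: unerased_def support_def code_length_def\<close>)
  thus ?thesis
    by auto
qed

lemma unerased_support_erased:
  assumes j: "j < k + h" "j \<in> E"
  shows "{u \<in> unerased. j \<in> support u} = local_group k h g (g j) - {j}"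
proof -
  define l where "l = g j"
  have l: "l < (k + h) div r"
    using group_lt[OF j(1)] by (simp add: l_def)
  have jl: "erased l = j"
    using j by (simp add: mem_erasures_iff group_of_def l_def)
  have "u \<in> unerased \<and> j \<in> support u \<longleftrightarrow> u \<in> local_group k h g l - {j}" for u
  proof
    assume u: "u \<in> unerased \<and> j \<in> support u"
    hence n: "u < code_length k r h" and "u \<noteq> j"
      using j(2) by (auto simp: unerased_def)
    hence "erased (group_of u) = j"
      using u by (auto simp: support_def)
    hence "group_of u = l"
      using erased_mem(3)[OF group_of_lt[OF n]] j(1) by (simp add: group_of_def l_def)
    thus "u \<in> local_group k h g l - {j}"
      using mem_local_group_iff[OF l] n \<open>u \<noteq> j\<close> by simp
  next
    assume "u \<in> local_group k h g l - {j}"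
    hence "u < code_length k r h" "group_of u = l" "u \<noteq> j"
      using mem_local_group_iff[OF l] by auto
    thus "u \<in> unerased \<and> j \<in> support u"
      using jl j(1) by (auto simp: unerased_def support_def mem_erasures_iff)
  qed
  thus ?thesis
    by (auto simp: l_def)
qed

lemma support_count_data:
  assumes "S \<subseteq> unerased" and "u \<in> S" and "u < k + h"
  shows "{v \<in> S. u \<in> support v} = {u}"
proof -
  have "u \<notin> E"
    using assms(1,2) by (auto simp: unerased_def)
  hence "{v \<in> unerased. u \<in> support v} = {u}"
    using unerased_support_unerased[OF assms(3)] by simp
  thus ?thesis
    using assms(1,2) by blast
qed

lemma support_count_parity:
  assumes S: "S \<subseteq> unerased" "\<forall>v\<in>S. k + h \<le> v" and u: "u \<in> S"
  shows "erased (group_of u) < k + h" and "{v \<in> S. erased (group_of u) \<in> support v} = {u}"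
proof -
  have n: "u < code_length k r h" "u \<notin> E"
    using S(1) u by (auto simp: unerased_def)
  define l where "l = group_of u"
  have l: "l < (k + h) div r"
    using group_of_lt[OF n(1)] by (simp add: l_def)
  have "k + h \<le> u"
    using S(2) u by blast
  hence ul: "u = k + h + l"
    by (simp add: l_def group_of_def)
  define j where "j = erased l"
  have j: "j \<in> E" "group_of j = l"
    using erased_mem[OF l] by (simp_all add: j_def)
  have jN: "j < k + h"
  proof (rule ccontr)
    assume "\<not> j < k + h"
    hence "j = u"
      using j(2) ul by (simp add: group_of_def)
    thus False
      using j(1) n(2) by simp
  qed
  thus "erased (group_of u) < k + h"
    by (simp add: j_def l_def)
  have "g j = l"
    using j(2) jN by (simp add: group_of_def)
  hence "{v \<in> unerased. j \<in> support v} = local_group k h g l - {j}"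
    using unerased_support_erased[OF jN j(1)] by simp
  moreover have "S \<inter> (local_group k h g l - {j}) = {u}"
  proof (intro equalityI subsetI)
    fix v assume v: "v \<in> S \<inter> (local_group k h g l - {j})"
    hence "k + h \<le> v" and "group_of v = l"
      using S(2) mem_local_group_iff[OF l] by auto
    thus "v \<in> {u}"
      using ul by (simp add: group_of_def)
  qed (use u n j(1) mem_local_group_iff[OF l] in \<open>auto simp: l_def\<close>)
  ultimately have "{v \<in> S. j \<in> support v} = {u}"
    using S(1) by blast
  thus "{v \<in> S. erased (group_of u) \<in> support v} = {u}"
    by (simp add: j_def l_def)
qed

lemma exists_odd_support_count:
  assumes "S \<subseteq> unerased" and "S \<noteq> {}"
  shows "\<exists>j<k + h. odd (card {u \<in> S. j \<in> support u})"
proof (cases "\<exists>u\<in>S. u < k + h")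
  case True
  then obtain u where "u \<in> S" "u < k + h"
    by blast
  with support_count_data[OF assms(1) this] show ?thesis
    by auto
next
  case False
  hence parity: "\<forall>v\<in>S. k + h \<le> v"
    by (simp add: not_less)
  obtain u where "u \<in> S"
    using assms(2) by blast
  with support_count_parity[OF assms(1) parity this] show ?thesis
    by auto
qed

lemma sum_unerased_support:
  fixes H :: "nat \<Rightarrow> nat \<Rightarrow> 'a::field"
  assumes CHAR: "CHAR('a) = 2" and j: "j < k + h"
  shows "(\<Sum>u\<in>{u \<in> unerased. j \<in> support u}. lrc_encode k r h H g x u) = dh_symbol k h H x j"
proof (cases "j \<in> E")
  case True
  define l where "l = g j"
  define D where "D = {i. i < k + h \<and> g i = l}"
  have l: "l < (k + h) div r"
    using group_lt[OF j] by (simp add: l_def)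
  have jD: "j \<in> D"
    using j by (simp add: D_def l_def)
  have fD: "finite D"
    by (simp add: D_def)
  have "local_group k h g l - {j} = insert (k + h + l) (D - {j})"
    using jD by (auto simp: local_group_def D_def)
  hence "(\<Sum>u\<in>{u \<in> unerased. j \<in> support u}. lrc_encode k r h H g x u) =
      lrc_encode k r h H g x (k + h + l) + (\<Sum>i\<in>D - {j}. lrc_encode k r h H g x i)"
    using True j fD by (simp add: unerased_support_erased l_def D_def)
  also have "\<dots> = sum (dh_symbol k h H x) D + sum (dh_symbol k h H x) (D - {j})"
    using l by (simp add: lrc_encode_def code_length_def D_def)
  also have "\<dots> = dh_symbol k h H x j"
    using CHAR_2_add_self[OF CHAR] by (simp add: sum.remove[OF fD jD] add.assoc)
  finally show ?thesis .
next
  case False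
  thus ?thesis
    using j by (simp add: unerased_support_unerased lrc_encode_def)
qed

end

locale moore_checked_code = erasure_pattern +
  fixes H :: "nat \<Rightarrow> nat \<Rightarrow> 'a::{field,finite}" and \<alpha> :: "nat \<Rightarrow> 'a"
  assumes CHAR_2: "CHAR('a) = 2"
    and k_pos: "0 < k"
    and gf2_independent_\<alpha>: "\<And>A. A \<subseteq> {..<k + h} \<Longrightarrow> card A \<le> 2 * h \<Longrightarrow> gf2_independent \<alpha> A"
    and heavy_checks: "\<And>x i. i < h \<Longrightarrow> (\<Sum>j<k + h. dh_symbol k h H x j * \<alpha> j ^ (2 ^ i)) = 0"
begin

definition \<beta> :: "nat \<Rightarrow> 'a" where
  "\<beta> u = sum \<alpha> (support u)"

lemma punctured_moore_checks:
  assumes "i < h"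
  shows "(\<Sum>u\<in>unerased. lrc_encode k r h H g x u * \<beta> u ^ (2 ^ i)) = 0"
proof -
  define a where "a j = \<alpha> j ^ (2 ^ i)" for j
  have "support u = {j \<in> {..<k + h}. j \<in> support u}" for u
    by (auto simp: support_def)
  hence "\<beta> u ^ (2 ^ i) = (\<Sum>j\<in>{j \<in> {..<k + h}. j \<in> support u}. a j)" for u
    by (simp add: \<beta>_def a_def CHAR_2_sum_power[OF CHAR_2])
  hence "(\<Sum>u\<in>unerased. lrc_encode k r h H g x u * \<beta> u ^ (2 ^ i)) =
      (\<Sum>u\<in>unerased. \<Sum>j\<in>{j \<in> {..<k + h}. j \<in> support u}. lrc_encode k r h H g x u * a j)"
    by (simp add: sum_distrib_left)
  also have "\<dots> = (\<Sum>j<k + h. \<Sum>u\<in>{u \<in> unerased. j \<in> support u}. lrc_encode k r h H g x u * a j)"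
    by (rule sum.swap_restrict[OF finite_unerased finite_lessThan])
  also have "\<dots> = (\<Sum>j<k + h. dh_symbol k h H x j * a j)"
    by (simp add: sum_unerased_support[OF CHAR_2] flip: sum_distrib_right)
  also have "\<dots> = 0"
    using heavy_checks[OF assms] by (simp add: a_def)
  finally show ?thesis .
qed

lemma gf2_independent_\<beta>:
  assumes "W \<subseteq> unerased" and "card W \<le> h"
  shows "gf2_independent \<beta> W"
  unfolding gf2_independent_def
proof (intro allI impI)
  fix S assume S: "S \<subseteq> W" "S \<noteq> {}"
  define A where "A = {j \<in> {..<k + h}. odd (card {u \<in> S. j \<in> support u})}"
  have SU: "S \<subseteq> unerased"
    using S(1) assms(1) by blast
  hence fS: "finite S"
    using finite_unerased finite_subset by blast
  have "sum \<beta> S = sum \<alpha> A"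
    unfolding \<beta>_def A_def by (rule CHAR_2_sum_sum_eq_sum_odd[OF CHAR_2 fS]) (auto simp: support_def)
  moreover have "A \<noteq> {}"
    using exists_odd_support_count[OF SU S(2)] by (auto simp: A_def)
  moreover have "card A \<le> 2 * h"
  proof -
    have "A \<subseteq> (\<Union>u\<in>S. support u)"
      by (auto simp: A_def card_gt_0_iff dest!: odd_pos)
    hence "card A \<le> card (\<Union>u\<in>S. support u)"
      by (intro card_mono finite_UN_I fS) (simp_all add: support_def)
    also have "\<dots> \<le> (\<Sum>u\<in>S. card (support u))"
      by (rule card_UN_le[OF fS])
    also have "\<dots> \<le> (\<Sum>u\<in>S. 2)"
    proof (rule sum_mono)
      fix u
      have "card (support u) \<le> card {u, erased (group_of u)}"
        by (rule card_mono) (auto simp: support_def)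
      also have "\<dots> \<le> 2"
        by (simp add: card_insert_if)
      finally show "card (support u) \<le> 2" .
    qed
    also have "\<dots> \<le> 2 * h"
      using card_mono[OF _ S(1)] assms fS finite_unerased finite_subset by fastforce
    finally show ?thesis .
  qed
  ultimately show "sum \<beta> S \<noteq> 0"
    using gf2_independent_\<alpha>[of A] by (auto simp: A_def gf2_independent_def)
qed

lemma punctured_weight_eq:
  "punctured_weight k r h H g E x = card {u \<in> unerased. lrc_encode k r h H g x u \<noteq> 0}"
  unfolding punctured_weight_def unerased_def by (rule arg_cong[where f = card]) auto

lemma punctured_weight_ge:
  assumes "nonzero_message k x"
  shows "h + 1 \<le> punctured_weight k r h H g E x"
proof (rule ccontr)
  define W where "W = {u \<in> unerased. lrc_encode k r h H g x u \<noteq> 0}"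
  assume "\<not> h + 1 \<le> punctured_weight k r h H g E x"
  hence W: "W \<subseteq> unerased" "card W \<le> h"
    by (auto simp: W_def punctured_weight_eq)
  have fW: "finite W"
    using W(1) finite_unerased finite_subset by blast
  have "\<forall>u\<in>W. lrc_encode k r h H g x u = 0"
  proof (rule moore_kernel_trivial[OF CHAR_2 fW gf2_independent_\<beta>[OF W]])
    fix i assume "i < card W"
    have "(\<Sum>u\<in>W. lrc_encode k r h H g x u * \<beta> u ^ (2 ^ i)) =
        (\<Sum>u\<in>unerased. lrc_encode k r h H g x u * \<beta> u ^ (2 ^ i))"
      by (rule sum.mono_neutral_left[OF finite_unerased W(1)]) (auto simp: W_def)
    also have "\<dots> = 0"
      using punctured_moore_checks \<open>i < card W\<close> W(2) by simp
    finally show "(\<Sum>u\<in>W. lrc_encode k r h H g x u * \<beta> u ^ (2 ^ i)) = 0" .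
  qed
  hence zero: "lrc_encode k r h H g x u = 0" if "u \<in> unerased" for u
    using that by (auto simp: W_def)
  obtain j where j: "j < k" "x j \<noteq> 0"
    using assms by (auto simp: nonzero_message_def)
  \<comment> \<open>the column sums of \<open>sum_unerased_support\<close> recover every symbol from the unerased ones\<close>
  have "x j = dh_symbol k h H x j"
    using j by (simp add: dh_symbol_def)
  also have "\<dots> = (\<Sum>u\<in>{u \<in> unerased. j \<in> support u}. lrc_encode k r h H g x u)"
    using j by (simp add: sum_unerased_support[OF CHAR_2])
  also have "\<dots> = 0"
    using zero by simp
  finally show False
    using j by simp
qed

lemma exists_punctured_weight_eq:
  "\<exists>x. nonzero_message k x \<and> punctured_weight k r h H g E x = h + 1"
proof -
  have "k - 1 \<le> card unerased"
    by (simp add: card_unerased)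
  then obtain T where T: "T \<subseteq> unerased" "card T = k - 1" and fT: "finite T"
    by (rule obtain_subset_with_card_n)
  obtain x where x: "nonzero_message k x" "\<forall>i\<in>T. lrc_encode k r h H g x i = 0"
    using exists_nonzero_message_vanishing_on[of T k "lrc_encode k r h H g", OF fT _ lrc_encode_diff]
      T(2) k_pos by auto
  have "punctured_weight k r h H g E x \<le> card (unerased - T)"
    unfolding punctured_weight_eq using x(2) finite_unerased by (intro card_mono) auto
  also have "\<dots> = h + 1"
    using T fT k_pos by (simp add: card_Diff_subset card_unerased)
  finally show ?thesis
    using punctured_weight_ge[OF x(1)] x(1) by (intro exI[of _ x]) simp
qed

lemma punctured_MDS: "punctured_MDS k r h H g E"
  unfolding punctured_MDS_def
proof (intro conjI allI impI)
  fix x :: "nat \<Rightarrow> 'a" assume "nonzero_message k x"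
  hence "0 < punctured_weight k r h H g E x"
    using punctured_weight_ge by fastforce
  thus "\<exists>i<code_length k r h. i \<notin> E \<and> lrc_encode k r h H g x i \<noteq> 0"
    unfolding punctured_weight_def by (auto simp: card_gt_0_iff)
qed (use punctured_weight_ge exists_punctured_weight_eq in blast)+

end

lemma maximally_recoverable_if_moore_checks:
  fixes H :: "nat \<Rightarrow> nat \<Rightarrow> 'a::{field,finite}"
  assumes "CHAR('a) = 2" and "0 < k" and "\<And>j. j < k + h \<Longrightarrow> g j < (k + h) div r"
    and "\<And>A. A \<subseteq> {..<k + h} \<Longrightarrow> card A \<le> 2 * h \<Longrightarrow> gf2_independent \<alpha> A"
    and "\<And>x i. i < h \<Longrightarrow> (\<Sum>j<k + h. dh_symbol k h H x j * \<alpha> j ^ (2 ^ i)) = 0"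
  shows "maximally_recoverable k r h H g"
  unfolding maximally_recoverable_def
proof (intro allI impI)
  fix E assume "E \<subseteq> {..<code_length k r h} \<and>
    (\<forall>l<(k + h) div r. card (E \<inter> local_group k h g l) = 1)"
  then interpret moore_checked_code k r h g E H \<alpha>
    using assms by unfold_locales auto
  show "punctured_MDS k r h H g E"
    by (rule punctured_MDS)
qed

lemma least_exponent_bounds:
  assumes "0 < k + h"
  shows "k + h < 2 ^ (LEAST m::nat. code_length k r h \<le> 2 ^ m - 1)"
    and "0 < (LEAST m::nat. code_length k r h \<le> 2 ^ m - 1)"
proof -
  have "code_length k r h \<le> 2 ^ (LEAST m::nat. code_length k r h \<le> 2 ^ m - 1) - 1"
    by (rule LeastI[of _ "code_length k r h"]) (use less_exp[of "code_length k r h"] in linarith)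
  thus "k + h < 2 ^ (LEAST m::nat. code_length k r h \<le> 2 ^ m - 1)"
    and "0 < (LEAST m::nat. code_length k r h \<le> 2 ^ m - 1)"
    using assms by (auto simp: code_length_def intro!: Nat.gr0I)
qed

theorem theorem12:
  fixes k r h :: nat
  assumes "k > 0" and "r > 0" and "h > 0" and "r dvd (k + h)"
    and "card (UNIV :: 'a::{field,finite} set) = 2 ^ (h * (LEAST m::nat. code_length k r h \<le> 2 ^ m - 1))"
  shows "\<exists>(H :: nat \<Rightarrow> nat \<Rightarrow> 'a) g. valid_partition k r h g \<and> maximally_recoverable k r h H g"
proof -
  define m where "m = (LEAST m::nat. code_length k r h \<le> 2 ^ m - 1)"
  have N: "k + h < 2 ^ m" and "0 < m" and card: "card (UNIV :: 'a set) = 2 ^ (h * m)"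
    using least_exponent_bounds[of k h r] assms(1,5) by (simp_all add: m_def)
  have CHAR: "CHAR('a) = 2"
    using CHAR_eq_2_if_card_power_of_two[OF card] \<open>h > 0\<close> \<open>0 < m\<close> by simp
  obtain \<alpha> :: "nat \<Rightarrow> 'a" where \<alpha>: "\<forall>A\<subseteq>{..<k + h}. card A \<le> 2 * h \<longrightarrow> gf2_independent \<alpha> A"
    using exists_gf2_independent_family[OF CHAR card \<open>h > 0\<close> \<open>0 < m\<close> N] by blast
  have "gf2_independent \<alpha> {k..<k + h}"
    using \<alpha>[rule_format, of "{k..<k + h}"] by (simp add: subset_eq)
  then obtain H :: "nat \<Rightarrow> nat \<Rightarrow> 'a"
    where "\<forall>x i. i < h \<longrightarrow> (\<Sum>j<k + h. dh_symbol k h H x j * \<alpha> j ^ (2 ^ i)) = 0"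
    using exists_heavy_parities[OF CHAR] by blast
  moreover have partition: "valid_partition k r h (\<lambda>j. j div r)"
    using valid_partition_div[OF assms(2,4)] .
  ultimately have "maximally_recoverable k r h H (\<lambda>j. j div r)"
    using \<alpha> by (intro maximally_recoverable_if_moore_checks[OF CHAR \<open>k > 0\<close>])
      (auto simp: valid_partition_def)
  thus ?thesis
    using partition by blast
qed

end
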